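(* Let $A\in\mathbb{R}^{n\times d}$, $b\in\mathbb{R}^n$, and suppose $Ax=b$ admits a solution $x^*$. Let $w$ be a random variable in $\mathbb{R}^d$, and let $\mathcal{L}(w) = \mathrm{span}\lbrace z\in\mathbb{R}^n : \mathbb{P}[z'Aw=0]=1\rbrace$ and $\mathcal{C}(w) = \mathcal{L}(w)^\perp$. Let $\lbrace w_\ell:\ell\geq0\rbrace$ be random variables in $\mathbb{R}^d$ with $\mathbb{P}[Aw_\ell\in\mathcal{C}(w)]=1$ for all $\ell$. Let $x_0\in\mathbb{R}^d$ be arbitrary, $$x_{k+1} = x_k + \frac{w_kw_k'A'(b-Ax_k)}{\|Aw_k\|_2^2},$$ and $r_k = Ax_k - b$ for $k\geq0$. Define $\tau_0 = 0$, $\tau_1 = \min\lbrace k\geq0 : \mathrm{span}\lbrace Aw_0,\ldots,Aw_k\rbrace = \mathcal{C}(w)\rbrace$, and for $\ell\geq2$, $\tau_\ell = \min\lbrace k>\tau_{\ell-1} : \mathrm{span}\lbrace Aw_{\tau_{\ell-1}+1},\ldots,Aw_k\rbrace = \mathcal{C}(w)\rbrace$ if $\tau_{\ell-1}<\infty$, else $\tau_\ell = \infty$. For finite stopping times, let $\mathcal{F}_\ell$ be the set of matrices whose columns form a maximal linearly independent subset of $\lbrace Aw_{\tau_{\ell-1}+1}/\|Aw_{\tau_{\ell-1}+1}\|_2,\ldots,Aw_{\tau_\ell}/\|Aw_{\tau_\ell}\|_2\rbrace$, and $\gamma_\ell = 1-\min_{F\in\mathcal{F}_\ell}\det(F'F)$.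 Then $\gamma_\ell\in[0,1)$ and, for any $\ell$, on the event $\lbrace\tau_\ell<\infty\rbrace$, $$\|r_{\tau_\ell+1} - P_{\mathcal{L}(w)}r_0\|_2^2 \leq \Big(\prod_{j=1}^\ell\gamma_j\Big)\|P_{\mathcal{C}(w)}r_0\|_2^2.$$ Therefore, for any $k$, $\|r_k - P_{\mathcal{L}(w)}r_0\|_2^2 \leq \big(\prod_{j=1}^{L(k)}\gamma_j\big)\|P_{\mathcal{C}(w)}r_0\|_2^2$, where $L(k) = \max\lbrace\ell : k\geq\tau_\ell+1\rbrace$, on the event $\lbrace\tau_{L(k)}<\infty\rbrace$.
   Context: $P_W$ is orthogonal projection onto $W$; $A'$ is the transpose. The iteration presupposes $Aw_k\neq0$. *)

theory Defs
  imports "HOL-Probability.Probability"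
begin

definition Lsp :: "real^'d^'n \<Rightarrow> 's measure \<Rightarrow> ('s \<Rightarrow> real^'d) \<Rightarrow> (real^'n) set" where
  "Lsp A M w = span {z. measure M {\<omega> \<in> space M. z \<bullet> (A *v w \<omega>) = 0} = 1}"

definition Csp :: "real^'d^'n \<Rightarrow> 's measure \<Rightarrow> ('s \<Rightarrow> real^'d) \<Rightarrow> (real^'n) set" where
  "Csp A M w = {y. \<forall>z \<in> Lsp A M w. z \<bullet> y = 0}"

definition oproj :: "'a::real_inner set \<Rightarrow> 'a \<Rightarrow> 'a" where
  "oproj W x = (THE p. p \<in> W \<and> (\<forall>y\<in>W. (x - p) \<bullet> y = 0))"

fun kz_iter :: "real^'d^'n \<Rightarrow> real^'n \<Rightarrow> real^'d \<Rightarrow> (nat \<Rightarrow> real^'d) \<Rightarrow> nat \<Rightarrow> real^'d" where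
  "kz_iter A b x0 w 0 = x0"
| "kz_iter A b x0 w (Suc k) =
     (let xk = kz_iter A b x0 w k
      in xk + ((w k \<bullet> (transpose A *v (b - A *v xk))) / (norm (A *v w k))^2) *\<^sub>R w k)"

text \<open>Stopping times tau_l for the sequence v k = A w_k and target subspace C.\<close>
fun stop_time :: "'a::real_vector set \<Rightarrow> (nat \<Rightarrow> 'a) \<Rightarrow> nat \<Rightarrow> enat" where
  "stop_time C v 0 = 0"
| "stop_time C v (Suc 0) =
     (if \<exists>k. span (v ` {0..k}) = C then enat (LEAST k. span (v ` {0..k}) = C) else \<infinity>)"
| "stop_time C v (Suc (Suc l)) =
     (case stop_time C v (Suc l) of
        enat t \<Rightarrow> (if \<exists>k. t < k \<and> span (v ` {t<..k}) = C
                   then enat (LEAST k. t < k \<and> span (v ` {t<..k}) = C) else \<infinity>)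
      | \<infinity> \<Rightarrow> \<infinity>)"

definition blk_start :: "'a::real_vector set \<Rightarrow> (nat \<Rightarrow> 'a) \<Rightarrow> nat \<Rightarrow> nat" where
  "blk_start C v l = (if l = 1 then 0 else the_enat (stop_time C v (l - 1)) + 1)"

text \<open>det(F'F) for the matrix F with columns us (Leibniz expansion of the Gram determinant).\<close>
definition gram_det :: "'a::real_inner list \<Rightarrow> real" where
  "gram_det us = (\<Sum>p | p permutes {..<length us}.
       of_int (sign p) * (\<Prod>i<length us. us ! i \<bullet> us ! (p i)))"

text \<open>Matrices (column lists) whose columns form a maximal linearly independent subset of S.\<close>
definition max_indep_cols :: "'a::real_vector set \<Rightarrow> 'a list set" where
  "max_indep_cols S = {us. distinct us \<and> set us \<subseteq> S \<and> independent (set us) \<and>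
      (\<forall>T. set us \<subseteq> T \<and> T \<subseteq> S \<and> independent T \<longrightarrow> T = set us)}"

definition gamma_blk :: "'a::real_inner set \<Rightarrow> (nat \<Rightarrow> 'a) \<Rightarrow> nat \<Rightarrow> real" where
  "gamma_blk C v l = 1 - Min (gram_det ` max_indep_cols
      ((\<lambda>j. v j /\<^sub>R norm (v j)) ` {blk_start C v l .. the_enat (stop_time C v l)}))"

end

theory Submission
  imports Defs "Jordan_Normal_Form.Determinant"
begin

text \<open>
  With \<open>u\<^sub>k = A w\<^sub>k / \<parallel>A w\<^sub>k\<parallel>\<close>, one step of the iteration replaces the residual \<open>r\<^sub>k\<close> by its
  orthogonal projection onto \<open>u\<^sub>k\<^sup>\<bottom>\<close>. Since every \<open>u\<^sub>k\<close> lies in \<open>C = L\<^sup>\<bottom>\<close>, the component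
  \<open>P\<^sub>L r\<^sub>0\<close> is never changed, and the error \<open>e\<^sub>k = r\<^sub>k - P\<^sub>L r\<^sub>0\<close> starts at \<open>P\<^sub>C r\<^sub>0\<close> and evolves
  inside \<open>C\<close> by the same projections; in particular \<open>\<parallel>e\<^sub>k\<parallel>\<close> is non-increasing.

  On a block of unit vectors spanning \<open>C\<close> the product of these projections contracts squared
  norms by \<open>1 - det(F'F)\<close>, where \<open>F\<close> is the maximal independent sublist selected greedily
  (Meany's inequality). This is proved by induction on the block: appending \<open>u = s + t\<close> with
  \<open>s\<close> in the span of the previous vectors and \<open>t\<close> orthogonal to it multiplies the Gram
  determinant by \<open>\<parallel>t\<parallel>\<^sup>2\<close>, and an elementary quadratic inequality controls the new norm.
  Since \<open>det(F'F) \<ge> min\<^sub>F det(F'F) > 0\<close>, each block contracts by \<open>\<gamma>\<^sub>\<ell> < 1\<close>; chaining the blocks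
  gives the bound at \<open>\<tau>\<^sub>\<ell> + 1\<close>, and monotonicity of \<open>\<parallel>e\<^sub>k\<parallel>\<close> the bound for arbitrary \<open>k\<close>.
\<close>

no_notation scalar_prod (infix "\<bullet>" 70)
hide_const (open) Matrix.orthogonal
hide_fact (open) Matrix.orthogonal_def

section \<open>Gram determinants\<close>

definition gram_matrix :: "'a::real_inner list \<Rightarrow> real mat" where
  "gram_matrix us = mat (length us) (length us) (\<lambda>(i, j). us ! i \<bullet> us ! j)"

lemma gram_matrix_carrier [simp]: "gram_matrix us \<in> carrier_mat (length us) (length us)"
  by (simp add: gram_matrix_def)

lemma gram_det_eq_det: "gram_det us = det (gram_matrix us)"
  unfolding gram_det_def det_def gram_matrix_def by (simp add: atLeast0LessThan)

lemma gram_det_Nil [simp]: "gram_det [] = 1"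
  by (simp add: gram_det_def)

lemma span_set_list_sum:
  fixes F :: "'a::real_vector list"
  assumes "x \<in> span (set F)"
  shows "\<exists>c. x = (\<Sum>i<length F. c i *\<^sub>R F ! i)"
  using assms
proof (induction F arbitrary: x rule: rev_induct)
  case (snoc a F)
  then obtain k where "x - k *\<^sub>R a \<in> span (set F)"
    by (auto simp: span_breakdown_eq)
  with snoc.IH obtain c where c: "x - k *\<^sub>R a = (\<Sum>i<length F. c i *\<^sub>R F ! i)"
    by blast
  have "x = (\<Sum>i<length (F @ [a]). (c(length F := k)) i *\<^sub>R (F @ [a]) ! i)"
    using c by (simp add: nth_append algebra_simps)
  then show ?case by blast
qed simp

lemma gram_matrix_lincomb:
  fixes U W :: "'a::real_inner list"
  assumes E: "E \<in> carrier_mat n n" and len: "length U = n" "length W = n"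
    and U: "\<And>j. j < n \<Longrightarrow> U ! j = (\<Sum>a<n. E $$ (a, j) *\<^sub>R W ! a)"
  shows "gram_matrix U = transpose_mat E * gram_matrix W * E"
proof (rule eq_matI)
  fix i j assume "i < dim_row (transpose_mat E * gram_matrix W * E)"
    and "j < dim_col (transpose_mat E * gram_matrix W * E)"
  then have i: "i < n" and j: "j < n" using E by auto
  have "gram_matrix U $$ (i, j) = (\<Sum>a<n. \<Sum>b<n. E $$ (a, i) * E $$ (b, j) * (W ! a \<bullet> W ! b))"
    using i j len by (simp add: gram_matrix_def U inner_sum_left inner_sum_right sum_distrib_left mult_ac)
  also have "\<dots> = (\<Sum>b<n. (\<Sum>a<n. E $$ (a, i) * (W ! a \<bullet> W ! b)) * E $$ (b, j))"
    by (subst sum.swap) (simp add: sum_distrib_left sum_distrib_right mult_ac)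
  also have "\<dots> = (transpose_mat E * gram_matrix W * E) $$ (i, j)"
    using i j E len by (simp add: scalar_prod_def gram_matrix_def atLeast0LessThan sum_distrib_right)
  finally show "gram_matrix U $$ (i, j) = (transpose_mat E * gram_matrix W * E) $$ (i, j)" .
qed (use E len in \<open>auto simp: gram_matrix_def\<close>)

lemma gram_det_append_lincomb:
  fixes F :: "'a::real_inner list" and c :: "nat \<Rightarrow> real"
  defines "s \<equiv> \<Sum>i<length F. c i *\<^sub>R F ! i"
  shows "gram_det (F @ [s + t]) = gram_det (F @ [t])"
proof -
  let ?n = "length F"
  txt \<open>Column operations: \<open>F @ [s + t] = (F @ [t]) E\<close> with \<open>E\<close> unit upper triangular.\<close>
  define E :: "real mat"
    where "E = mat (Suc ?n) (Suc ?n) (\<lambda>(i, j). if i = j then 1 else if j = ?n then c i else 0)"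
  have E: "E \<in> carrier_mat (Suc ?n) (Suc ?n)" by (simp add: E_def)
  have "det E = (\<Prod>i = 0..<Suc ?n. E $$ (i, i))"
    using det_upper_triangular[OF _ E] by (auto simp: upper_triangular_def E_def prod_list_diag_prod)
  also have "\<dots> = 1" by (intro prod.neutral) (simp add: E_def)
  finally have det_E: "det E = 1" .
  have "(F @ [s + t]) ! j = (\<Sum>a<Suc ?n. E $$ (a, j) *\<^sub>R (F @ [t]) ! a)" if "j < Suc ?n" for j
  proof (cases "j = ?n")
    case True
    then show ?thesis by (simp add: E_def nth_append s_def)
  next
    case False
    then have "(\<Sum>a<Suc ?n. E $$ (a, j) *\<^sub>R (F @ [t]) ! a) = (\<Sum>a<Suc ?n. if a = j then (F @ [t]) ! j else 0)"
      using that by (intro sum.cong) (auto simp: E_def)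
    then show ?thesis using False that by (simp add: nth_append)
  qed
  then have "gram_matrix (F @ [s + t]) = transpose_mat E * gram_matrix (F @ [t]) * E"
    by (intro gram_matrix_lincomb[OF E]) simp_all
  moreover have G: "gram_matrix (F @ [t]) \<in> carrier_mat (Suc ?n) (Suc ?n)"
    using gram_matrix_carrier[of "F @ [t]"] by simp
  ultimately have "gram_det (F @ [s + t]) = det (transpose_mat E * gram_matrix (F @ [t])) * det E"
    using E by (simp add: gram_det_eq_det det_mult[of _ "Suc ?n"] mult_carrier_mat)
  also have "\<dots> = det (transpose_mat E) * det (gram_matrix (F @ [t])) * det E"
    using E G by (simp add: det_mult[of _ "Suc ?n"])
  finally show ?thesis
    using E det_E by (simp add: gram_det_eq_det det_transpose)
qed

lemma gram_det_append_add_span: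
  fixes F :: "'a::real_inner list"
  assumes "s \<in> span (set F)"
  shows "gram_det (F @ [s + t]) = gram_det (F @ [t])"
  using span_set_list_sum[OF assms] gram_det_append_lincomb by metis

lemma gram_det_append_orthogonal:
  fixes F :: "'a::real_inner list"
  assumes "\<forall>f\<in>set F. f \<bullet> t = 0"
  shows "gram_det (F @ [t]) = gram_det F * (norm t)\<^sup>2"
proof -
  let ?n = "length F"
  have "gram_matrix (F @ [t]) = four_block_mat (gram_matrix F) (0\<^sub>m ?n 1)
      (mat 1 ?n (\<lambda>(i, j). t \<bullet> F ! j)) (mat 1 1 (\<lambda>_. t \<bullet> t))"
    using assms by (intro eq_matI) (auto simp: gram_matrix_def nth_append inner_commute)
  then show ?thesis
    by (simp add: gram_det_eq_det det_four_block_mat_upper_right_zero[of _ ?n _ 1] det_single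
        power2_norm_eq_inner)
qed

lemma gram_det_append_decomp:
  fixes F :: "'a::euclidean_space list"
  obtains s t where "s \<in> span (set F)" "\<And>y. y \<in> span (set F) \<Longrightarrow> orthogonal y t" "u = s + t"
    "gram_det (F @ [u]) = gram_det F * (norm t)\<^sup>2"
proof -
  obtain s t where s: "s \<in> span (set F)" and t: "\<And>y. y \<in> span (set F) \<Longrightarrow> orthogonal t y"
    and u: "u = s + t"
    by (rule orthogonal_subspace_decomp_exists[of "set F" u]) blast
  have "gram_det (F @ [u]) = gram_det F * (norm t)\<^sup>2"
    unfolding u gram_det_append_add_span[OF s]
    using t by (intro gram_det_append_orthogonal) (simp add: span_base orthogonal_def inner_commute)
  moreover have "\<And>y. y \<in> span (set F) \<Longrightarrow> orthogonal y t"
    using t by (simp add: orthogonal_commute)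
  ultimately show ?thesis using s u that by blast
qed

lemma norm_unit_orthogonal_sum:
  assumes "norm (s + t) = 1" "orthogonal s t"
  shows "(norm s)\<^sup>2 = 1 - (norm t)\<^sup>2" "(norm t)\<^sup>2 \<le> 1"
proof -
  have "(norm s)\<^sup>2 + (norm t)\<^sup>2 = 1" using norm_add_Pythagorean[OF assms(2)] assms(1) by simp
  then show "(norm s)\<^sup>2 = 1 - (norm t)\<^sup>2" "(norm t)\<^sup>2 \<le> 1"
    using zero_le_power2[of "norm s"] by linarith+
qed

lemma gram_det_unit_bounds:
  fixes F :: "'a::euclidean_space list"
  assumes "distinct F" "independent (set F)" "\<forall>f\<in>set F. norm f = 1"
  shows "0 < gram_det F \<and> gram_det F \<le> 1"
  using assms
proof (induction F rule: rev_induct)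
  case (snoc u F)
  then have IH: "0 < gram_det F \<and> gram_det F \<le> 1" and u_notin: "u \<notin> span (set F)"
    by (auto simp: independent_insert)
  obtain s t where s: "s \<in> span (set F)" and t: "\<And>y. y \<in> span (set F) \<Longrightarrow> orthogonal y t"
    and u: "u = s + t" and gd: "gram_det (F @ [u]) = gram_det F * (norm t)\<^sup>2"
    using gram_det_append_decomp[of F u] by blast
  have "t \<noteq> 0" using u_notin s u by auto
  moreover have "(norm t)\<^sup>2 \<le> 1"
    using norm_unit_orthogonal_sum(2)[of s t] snoc.prems(3) t[OF s] u by simp
  ultimately show ?case using IH gd by (simp add: mult_le_one)
qed simp

section \<open>Products of projections onto hyperplanes\<close>

definition perp_proj :: "'a::real_inner \<Rightarrow> 'a \<Rightarrow> 'a" where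
  "perp_proj u z = z - (u \<bullet> z) *\<^sub>R u"

definition perp_projs :: "'a::real_inner list \<Rightarrow> 'a \<Rightarrow> 'a" where
  "perp_projs us = fold perp_proj us"

lemma perp_projs_Nil [simp]: "perp_projs [] z = z"
  by (simp add: perp_projs_def)

lemma perp_projs_Cons [simp]: "perp_projs (u # us) z = perp_projs us (perp_proj u z)"
  by (simp add: perp_projs_def)

lemma perp_projs_append [simp]: "perp_projs (us @ vs) z = perp_projs vs (perp_projs us z)"
  by (simp add: perp_projs_def)

lemma perp_projs_upt_split:
  assumes "a \<le> k"
  shows "perp_projs (map f [0..<k]) x = perp_projs (map f [a..<k]) (perp_projs (map f [0..<a]) x)"
proof -
  have "[0..<k] = [0..<a] @ [a..<k]" using assms upt_add_eq_append[of 0 a "k - a"] by simp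
  then show ?thesis by simp
qed

lemma norm_perp_proj_sq:
  assumes "norm u = 1"
  shows "(norm (perp_proj u z))\<^sup>2 = (norm z)\<^sup>2 - (u \<bullet> z)\<^sup>2"
proof -
  have "u \<bullet> u = 1" using assms by (simp add: dot_square_norm)
  then show ?thesis unfolding perp_proj_def power2_norm_eq_inner
    by (simp add: inner_diff_left inner_diff_right inner_commute power2_eq_square algebra_simps)
qed

lemma norm_perp_proj_le:
  assumes "norm u = 1"
  shows "norm (perp_proj u z) \<le> norm z"
proof -
  have "(norm (perp_proj u z))\<^sup>2 \<le> (norm z)\<^sup>2" using norm_perp_proj_sq[OF assms, of z] by simp
  then show ?thesis by (rule power2_le_imp_le) simp
qed

lemma norm_perp_projs_le: "\<forall>u\<in>set us. norm u = 1 \<Longrightarrow> norm (perp_projs us z) \<le> norm z"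
proof (induction us arbitrary: z)
  case (Cons u us)
  then show ?case using norm_perp_proj_le[of u z] by (fastforce intro: order_trans)
qed simp

lemma perp_projs_add_orthogonal:
  "\<forall>u\<in>set us. u \<bullet> f = 0 \<Longrightarrow> perp_projs us (z + f) = perp_projs us z + f"
proof (induction us arbitrary: z)
  case (Cons u us)
  then have "perp_proj u (z + f) = perp_proj u z + f"
    by (simp add: perp_proj_def inner_add_right algebra_simps)
  with Cons show ?case by simp
qed simp

lemma perp_projs_in_subspace:
  "subspace T \<Longrightarrow> set us \<subseteq> T \<Longrightarrow> z \<in> T \<Longrightarrow> perp_projs us z \<in> T"
  by (induction us arbitrary: z) (auto simp: perp_proj_def subspace_diff subspace_scale)

text \<open>The quadratic inequality behind one step of Meany's inequality; \<open>g\<close> is the Gram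
  determinant so far, \<open>d = \<parallel>t\<parallel>\<^sup>2\<close>, \<open>A\<close> and \<open>p\<close> are the squared norms after and before the
  previous projections, \<open>\<sigma> = s \<bullet> a\<close> and \<open>k\<close> the coefficient of the new direction.\<close>

lemma meany_step_inequality:
  fixes g d A p \<sigma> k :: real
  assumes "0 \<le> g" "g \<le> 1" "0 \<le> d" "d \<le> 1" "0 \<le> p" "A \<le> (1 - g) * p" "\<sigma>\<^sup>2 \<le> (1 - d) * A"
  shows "A + k\<^sup>2 * d - (\<sigma> + k * d)\<^sup>2 \<le> (1 - g * d) * (p + k\<^sup>2 * d)"
proof -
  let ?slack = "(1 - g * d) * (p + k\<^sup>2 * d) - (A + k\<^sup>2 * d - (\<sigma> + k * d)\<^sup>2)"
  have gd: "0 \<le> 1 - g * d" using assms(1-4) by (simp add: mult_le_one)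
  have "0 \<le> ?slack"
  proof (cases "g = 1")
    case True
    then have "A \<le> 0" using assms(6) by simp
    then have "\<sigma>\<^sup>2 \<le> 0" using assms(4,7) mult_nonneg_nonpos[of "1 - d" A] by linarith
    then have "\<sigma> = 0" by simp
    have "?slack = (1 - d) * p - A"
      using True \<open>\<sigma> = 0\<close> by (simp add: power2_eq_square algebra_simps)
    moreover have "0 \<le> (1 - d) * p" using assms(4,5) by simp
    ultimately show ?thesis using \<open>A \<le> 0\<close> by linarith
  next
    case False
    define q where "q = 1 - g"
    have q: "0 < q" using False assms(2) unfolding q_def by simp
    txt \<open>Multiplied by \<open>q\<close>, the slack is a square plus two terms that are non-negative by hypothesis.\<close>
    have "q * ?slack
        = (\<sigma> + q * (k * d))\<^sup>2 + (q * ((1 - g * d) * p) - (1 - g * d) * A) + (g * ((1 - d) * A) - g * \<sigma>\<^sup>2)"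
      unfolding q_def by (simp add: power2_eq_square algebra_simps)
    moreover have "(1 - g * d) * A \<le> q * ((1 - g * d) * p)"
      using mult_left_mono[OF assms(6) gd] by (simp add: q_def mult.left_commute)
    moreover have "g * \<sigma>\<^sup>2 \<le> g * ((1 - d) * A)"
      using mult_left_mono[OF assms(7) assms(1)] .
    ultimately have "0 \<le> q * ?slack"
      using zero_le_power2[of "\<sigma> + q * (k * d)"] by linarith
    then show ?thesis using q by (simp add: zero_le_mult_iff)
  qed
  then show ?thesis by linarith
qed

lemma perp_projs_append_contraction:
  fixes us :: "'a::euclidean_space list"
  assumes g: "0 \<le> g" "g \<le> 1"
    and contraction: "\<And>y. y \<in> span (set us) \<Longrightarrow> (norm (perp_projs us y))\<^sup>2 \<le> (1 - g) * (norm y)\<^sup>2"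
    and s: "s \<in> span (set us)" and t: "\<And>y. y \<in> span (set us) \<Longrightarrow> orthogonal y t"
    and u: "u = s + t" "norm u = 1" and x: "x \<in> span (insert u (set us))"
  shows "(norm (perp_projs (us @ [u]) x))\<^sup>2 \<le> (1 - g * (norm t)\<^sup>2) * (norm x)\<^sup>2"
proof -
  define d where "d = (norm t)\<^sup>2"
  have norm_s: "(norm s)\<^sup>2 = 1 - d" and d: "0 \<le> d" "d \<le> 1"
    using norm_unit_orthogonal_sum[of s t] t[OF s] u by (auto simp: d_def)
  obtain k where k: "x - k *\<^sub>R u \<in> span (set us)"
    using x by (auto simp: span_breakdown_eq)
  txt \<open>Split \<open>x = y + k t\<close> with \<open>y\<close> in the old span; the old projections fix \<open>k t\<close>.\<close>
  define y where "y = x - k *\<^sub>R t"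
  have "y = (x - k *\<^sub>R u) + k *\<^sub>R s"
    unfolding y_def u by (simp add: algebra_simps)
  then have y: "y \<in> span (set us)"
    using k s by (simp add: span_add span_scale)
  define a where "a = perp_projs us y"
  have a: "a \<in> span (set us)"
    unfolding a_def using y by (simp add: perp_projs_in_subspace span_superset)
  have "\<forall>v\<in>set us. v \<bullet> (k *\<^sub>R t) = 0"
    using t[OF span_base] by (simp add: orthogonal_def)
  then have "perp_projs us x = a + k *\<^sub>R t"
    using perp_projs_add_orthogonal[of us "k *\<^sub>R t" y] by (simp add: a_def y_def)
  then have "(norm (perp_projs (us @ [u]) x))\<^sup>2 = (norm (a + k *\<^sub>R t))\<^sup>2 - (u \<bullet> (a + k *\<^sub>R t))\<^sup>2"
    by (simp add: norm_perp_proj_sq u(2))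
  also have "\<dots> = (norm a)\<^sup>2 + k\<^sup>2 * d - (s \<bullet> a + k * d)\<^sup>2"
    using norm_add_Pythagorean[of a "k *\<^sub>R t"] t[OF a] t[OF s]
    by (simp add: u(1) d_def orthogonal_def power_mult_distrib inner_add_left inner_add_right
        inner_commute power2_norm_eq_inner)
  also have "\<dots> \<le> (1 - g * d) * ((norm y)\<^sup>2 + k\<^sup>2 * d)"
  proof (rule meany_step_inequality[OF g d])
    show "(norm a)\<^sup>2 \<le> (1 - g) * (norm y)\<^sup>2" using contraction[OF y] by (simp add: a_def)
    show "(s \<bullet> a)\<^sup>2 \<le> (1 - d) * (norm a)\<^sup>2"
      using power_mono[OF Cauchy_Schwarz_ineq2[of s a] abs_ge_zero, of 2]
      by (simp add: power_mult_distrib norm_s)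
  qed simp
  also have "(norm y)\<^sup>2 + k\<^sup>2 * d = (norm x)\<^sup>2"
    using norm_add_Pythagorean[of y "k *\<^sub>R t"] t[OF y]
    by (simp add: y_def d_def orthogonal_def power_mult_distrib)
  finally show ?thesis by (simp add: d_def)
qed

lemma meany_inequality:
  fixes us :: "'a::euclidean_space list"
  assumes "\<forall>u\<in>set us. norm u = 1"
  shows "\<exists>F. distinct F \<and> set F \<subseteq> set us \<and> independent (set F) \<and> span (set F) = span (set us) \<and>
    (\<forall>x\<in>span (set us). (norm (perp_projs us x))\<^sup>2 \<le> (1 - gram_det F) * (norm x)\<^sup>2)"
  using assms
proof (induction us rule: rev_induct)
  case (snoc u us)
  then obtain F where F: "distinct F" "set F \<subseteq> set us" "independent (set F)"
      "span (set F) = span (set us)"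
    and contraction: "\<forall>x\<in>span (set us). (norm (perp_projs us x))\<^sup>2 \<le> (1 - gram_det F) * (norm x)\<^sup>2"
    by auto
  have unit: "\<forall>v\<in>set us. norm v = 1" "norm u = 1" using snoc.prems by auto
  have "\<forall>f\<in>set F. norm f = 1" using F(2) unit(1) by auto
  then have g: "0 \<le> gram_det F" "gram_det F \<le> 1"
    using gram_det_unit_bounds[OF F(1,3)] by auto
  show ?case
  proof (cases "u \<in> span (set us)")
    case True
    then have span_eq: "span (set (us @ [u])) = span (set us)" by (simp add: span_redundant)
    have bound: "(norm (perp_projs (us @ [u]) x))\<^sup>2 \<le> (1 - gram_det F) * (norm x)\<^sup>2"
      if "x \<in> span (set us)" for x
    proof -
      have "(norm (perp_projs (us @ [u]) x))\<^sup>2 \<le> (norm (perp_projs us x))\<^sup>2"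
        using norm_perp_proj_le[OF unit(2)] by (intro power_mono) simp_all
      also have "\<dots> \<le> (1 - gram_det F) * (norm x)\<^sup>2" using contraction that by blast
      finally show ?thesis .
    qed
    have "set F \<subseteq> set (us @ [u])" using F(2) by auto
    then show ?thesis using F(1,3,4) span_eq bound by (intro exI[of _ F]) simp
  next
    case False
    obtain s t where s: "s \<in> span (set us)" and t: "\<And>y. y \<in> span (set us) \<Longrightarrow> orthogonal y t"
      and u: "u = s + t" and gd: "gram_det (F @ [u]) = gram_det F * (norm t)\<^sup>2"
      using gram_det_append_decomp[of F u] unfolding F(4) by blast
    have "span (set (F @ [u])) = span (set (us @ [u]))"
      using F(4) by (simp add: span_insert)
    moreover have "(norm (perp_projs (us @ [u]) x))\<^sup>2 \<le> (1 - gram_det (F @ [u])) * (norm x)\<^sup>2"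
      if "x \<in> span (set (us @ [u]))" for x
      unfolding gd using perp_projs_append_contraction[OF g _ s t u unit(2)] contraction that by simp
    moreover have "distinct (F @ [u])" "independent (set (F @ [u]))"
      using F False span_base by (auto simp: independent_insert)
    ultimately show ?thesis using F(2) by (intro exI[of _ "F @ [u]"]) auto
  qed
qed (auto simp: independent_empty)

lemma max_indep_colsI:
  assumes "distinct F" "set F \<subseteq> S" "independent (set F)" "S \<subseteq> span (set F)"
  shows "F \<in> max_indep_cols S"
  unfolding max_indep_cols_def
proof (intro CollectI conjI allI impI assms(1-3))
  fix T assume T: "set F \<subseteq> T \<and> T \<subseteq> S \<and> independent T"
  show "T = set F"
  proof (rule ccontr)
    assume "T \<noteq> set F"
    then obtain y where y: "y \<in> T" "y \<notin> set F" using T by blast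
    then have "y \<in> span (T - {y})"
      using T assms(4) span_mono[of "set F" "T - {y}"] by blast
    then show False using T y(1) by (auto simp: dependent_def)
  qed
qed

lemma finite_max_indep_cols: "finite S \<Longrightarrow> finite (max_indep_cols S)"
  by (rule finite_subset[OF _ finite_subset_distinct]) (auto simp: max_indep_cols_def)

lemma Min_gram_det_contraction:
  fixes us :: "'a::euclidean_space list"
  assumes unit: "\<forall>u\<in>set us. norm u = 1"
  defines "m \<equiv> Min (gram_det ` max_indep_cols (set us))"
  shows "0 < m" "m \<le> 1" "x \<in> span (set us) \<Longrightarrow> (norm (perp_projs us x))\<^sup>2 \<le> (1 - m) * (norm x)\<^sup>2"
proof -
  obtain F where F: "distinct F" "set F \<subseteq> set us" "independent (set F)" "span (set F) = span (set us)"
    and contraction: "\<forall>x\<in>span (set us). (norm (perp_projs us x))\<^sup>2 \<le> (1 - gram_det F) * (norm x)\<^sup>2"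
    using meany_inequality[OF unit] by blast
  have F_max: "F \<in> max_indep_cols (set us)"
    using F span_superset by (intro max_indep_colsI) auto
  have fin: "finite (gram_det ` max_indep_cols (set us))"
    by (simp add: finite_max_indep_cols)
  have "m \<in> gram_det ` max_indep_cols (set us)"
    unfolding m_def using F_max fin by (intro Min_in) auto
  then show "0 < m" "m \<le> 1"
    using gram_det_unit_bounds unit by (auto simp: max_indep_cols_def)
  have "m \<le> gram_det F" unfolding m_def using F_max fin by simp
  then show "(norm (perp_projs us x))\<^sup>2 \<le> (1 - m) * (norm x)\<^sup>2" if "x \<in> span (set us)"
    using contraction that by (meson diff_left_mono mult_right_mono order_trans zero_le_power2)
qed

lemma oproj_eqI:
  fixes W :: "'a::real_inner set"
  assumes "subspace W" "p \<in> W" "\<And>y. y \<in> W \<Longrightarrow> (x - p) \<bullet> y = 0"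
  shows "oproj W x = p"
  unfolding oproj_def
proof (rule the_equality)
  fix q assume q: "q \<in> W \<and> (\<forall>y\<in>W. (x - q) \<bullet> y = 0)"
  then have "q - p \<in> W" using assms by (simp add: subspace_diff)
  then have "(x - q) \<bullet> (q - p) = 0" "(x - p) \<bullet> (q - p) = 0" using q assms by blast+
  then have "(q - p) \<bullet> (q - p) = 0" by (simp add: inner_diff_left inner_diff_right inner_commute)
  then show "q = p" by simp
qed (use assms in blast)

lemma oproj_in_orthogonal:
  fixes W :: "'a::euclidean_space set"
  assumes "subspace W"
  shows "oproj W x \<in> W" "y \<in> W \<Longrightarrow> (x - oproj W x) \<bullet> y = 0"
proof -
  obtain p z where p: "p \<in> span W" and z: "\<And>y. y \<in> span W \<Longrightarrow> orthogonal z y" and x: "x = p + z"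
    by (rule orthogonal_subspace_decomp_exists[of W x]) blast
  have "p \<in> W" using p assms by (metis span_eq_iff)
  moreover have "\<And>y. y \<in> W \<Longrightarrow> (x - p) \<bullet> y = 0"
    using z x span_base by (auto simp: orthogonal_def)
  ultimately show "oproj W x \<in> W" "y \<in> W \<Longrightarrow> (x - oproj W x) \<bullet> y = 0"
    using oproj_eqI[OF assms] by auto
qed

lemma oproj_orthogonal_comp:
  fixes L :: "'a::euclidean_space set"
  assumes "subspace L"
  shows "oproj (orthogonal_comp L) x = x - oproj L x"
proof -
  have "oproj L x \<in> L" "\<And>y. y \<in> L \<Longrightarrow> (x - oproj L x) \<bullet> y = 0"
    using oproj_in_orthogonal[OF assms] by auto
  then show ?thesis
    by (intro oproj_eqI subspace_orthogonal_comp) (auto simp: orthogonal_comp_def orthogonal_def inner_commute)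
qed

lemma Csp_eq_orthogonal_comp: "Csp A M w = orthogonal_comp (Lsp A M w)"
  by (simp add: Csp_def orthogonal_comp_def orthogonal_def)

section \<open>Stopping times\<close>

lemma stop_time_Suc_0_span:
  assumes "stop_time C v (Suc 0) = enat t"
  shows "span (v ` {0..t}) = C"
proof -
  have ex: "\<exists>k. span (v ` {0..k}) = C" using assms by (auto split: if_splits)
  then have "t = (LEAST k. span (v ` {0..k}) = C)" using assms by simp
  then show ?thesis using LeastI_ex[OF ex] by simp
qed

lemma stop_time_Suc_Suc_span:
  assumes "stop_time C v (Suc (Suc l)) = enat t"
  obtains t' where "stop_time C v (Suc l) = enat t'" "t' < t" "span (v ` {t'<..t}) = C"
proof (cases "stop_time C v (Suc l)")
  case (enat t')
  have ex: "\<exists>k. t' < k \<and> span (v ` {t'<..k}) = C" using assms enat by (auto split: if_splits)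
  then have "t = (LEAST k. t' < k \<and> span (v ` {t'<..k}) = C)" using assms enat by simp
  then show ?thesis using LeastI_ex[OF ex] enat that by simp
qed (use assms in simp)

lemma stop_time_index_le: "stop_time C v l = enat t \<Longrightarrow> l \<le> t + 1"
proof (induction C v l arbitrary: t rule: stop_time.induct)
  case (3 C v l)
  then obtain t' where "stop_time C v (Suc l) = enat t'" "t' < t"
    using stop_time_Suc_Suc_span by metis
  then show ?case using "3.IH" by fastforce
qed simp_all

lemma stop_time_block_span:
  assumes "1 \<le> l" "stop_time C v l = enat t"
  shows "blk_start C v l \<le> t" "span (v ` {blk_start C v l..t}) = C"
proof -
  consider "l = Suc 0" | m where "l = Suc (Suc m)"
    using assms(1) by (metis One_nat_def Suc_le_D not0_implies_Suc)
  then have "blk_start C v l \<le> t \<and> span (v ` {blk_start C v l..t}) = C"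
  proof cases
    case 1
    then show ?thesis using stop_time_Suc_0_span assms by (simp add: blk_start_def)
  next
    case (2 m)
    then obtain t' where "stop_time C v (Suc m) = enat t'" "t' < t" "span (v ` {t'<..t}) = C"
      using stop_time_Suc_Suc_span assms by metis
    then show ?thesis using 2 by (simp add: blk_start_def atLeastSucAtMost_greaterThanAtMost)
  qed
  then show "blk_start C v l \<le> t" "span (v ` {blk_start C v l..t}) = C" by auto
qed

lemma stop_time_Max_finite:
  assumes "1 \<le> k"
  obtains t where "stop_time C v (Max {l. stop_time C v l + 1 \<le> enat k}) = enat t" "t + 1 \<le> k"
proof -
  define S where "S = {l. stop_time C v l + 1 \<le> enat k}"
  have "l \<le> k" if "l \<in> S" for l
  proof (cases "stop_time C v l")
    case (enat t)
    then show ?thesis using that stop_time_index_le[OF enat] by (simp add: S_def one_enat_def)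
  qed (use that in \<open>simp add: S_def\<close>)
  then have "S \<subseteq> {..k}" by blast
  moreover have "0 \<in> S" using assms by (simp add: S_def one_enat_def)
  ultimately have "Max S \<in> S" by (intro Max_in) (auto dest: finite_subset)
  then show ?thesis using that unfolding S_def
    by (cases "stop_time C v (Max S)") (auto simp: S_def one_enat_def)
qed

lemma span_sgn_image:
  fixes X :: "'a::real_normed_vector set"
  assumes "0 \<notin> X"
  shows "span (sgn ` X) = span X"
proof -
  have "x = norm x *\<^sub>R sgn x" if "x \<in> X" for x
  proof -
    have "x \<noteq> 0" using that assms by auto
    then show ?thesis by (simp add: sgn_div_norm)
  qed
  then have "X \<subseteq> span (sgn ` X)"
    by (metis image_eqI span_base span_scale subsetI)
  moreover have "sgn ` X \<subseteq> span X"
    by (auto simp: sgn_div_norm intro: span_scale span_base)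
  ultimately show ?thesis by (simp add: span_eq)
qed

lemma gamma_blk_contraction:
  fixes v :: "nat \<Rightarrow> 'a::euclidean_space"
  assumes nonzero: "\<And>k. v k \<noteq> 0" and l: "1 \<le> l" "stop_time C v l = enat t"
  shows "0 \<le> gamma_blk C v l" "gamma_blk C v l < 1"
    "y \<in> C \<Longrightarrow>
      (norm (perp_projs (map (\<lambda>j. sgn (v j)) [blk_start C v l..<Suc t]) y))\<^sup>2 \<le> gamma_blk C v l * (norm y)\<^sup>2"
proof -
  let ?us = "map (\<lambda>j. sgn (v j)) [blk_start C v l..<Suc t]"
  have set_us: "set ?us = sgn ` v ` {blk_start C v l..t}"
    by (simp only: set_map set_upt atLeastLessThanSuc_atLeastAtMost image_image)
  have gamma: "gamma_blk C v l = 1 - Min (gram_det ` max_indep_cols (sgn ` v ` {blk_start C v l..t}))"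
    using l by (simp add: gamma_blk_def image_image sgn_div_norm)
  have "span (sgn ` v ` {blk_start C v l..t}) = C"
    using span_sgn_image[of "v ` {blk_start C v l..t}"] stop_time_block_span[OF l] nonzero
    by (simp add: image_iff)
  then show "0 \<le> gamma_blk C v l" "gamma_blk C v l < 1"
    "y \<in> C \<Longrightarrow> (norm (perp_projs ?us y))\<^sup>2 \<le> gamma_blk C v l * (norm y)\<^sup>2"
    using Min_gram_det_contraction[of ?us, unfolded set_us] nonzero
    unfolding gamma by (auto simp: norm_sgn)
qed

lemma stop_time_product_bound:
  fixes v :: "nat \<Rightarrow> 'a::euclidean_space"
  assumes nonzero: "\<And>k. v k \<noteq> 0" and v_in: "\<And>k. v k \<in> C" and C: "subspace C" and x: "x \<in> C"
  shows "stop_time C v l = enat t \<Longrightarrow>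
    (norm (perp_projs (map (\<lambda>j. sgn (v j)) [0..<Suc t]) x))\<^sup>2 \<le> (\<Prod>j=1..l. gamma_blk C v j) * (norm x)\<^sup>2"
proof (induction l arbitrary: t)
  case 0
  then show ?case
    using norm_perp_proj_le[of "sgn (v 0)" x] nonzero by (simp add: zero_enat_def norm_sgn power_mono)
next
  case (Suc l)
  let ?e = "\<lambda>k. perp_projs (map (\<lambda>j. sgn (v j)) [0..<k]) x"
  define a where "a = blk_start C v (Suc l)"
  have "a \<le> Suc t" using stop_time_block_span[OF _ Suc.prems] by (simp add: a_def)
  then have e: "?e (Suc t) = perp_projs (map (\<lambda>j. sgn (v j)) [a..<Suc t]) (?e a)"
    by (rule perp_projs_upt_split)
  have "?e a \<in> C"
    using C x v_in by (intro perp_projs_in_subspace) (auto simp: subspace_scale sgn_div_norm)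
  then have blk: "0 \<le> gamma_blk C v (Suc l)"
    "(norm (?e (Suc t)))\<^sup>2 \<le> gamma_blk C v (Suc l) * (norm (?e a))\<^sup>2"
    using gamma_blk_contraction[OF nonzero _ Suc.prems] unfolding e a_def by auto
  have "(norm (?e a))\<^sup>2 \<le> (\<Prod>j=1..l. gamma_blk C v j) * (norm x)\<^sup>2"
  proof (cases l)
    case (Suc m)
    then obtain t' where "stop_time C v l = enat t'"
      using stop_time_Suc_Suc_span Suc.prems by metis
    then show ?thesis using Suc.IH Suc by (simp add: a_def blk_start_def)
  qed (simp add: a_def blk_start_def)
  then have "(norm (?e (Suc t)))\<^sup>2 \<le> gamma_blk C v (Suc l) * ((\<Prod>j=1..l. gamma_blk C v j) * (norm x)\<^sup>2)"
    using blk order_trans mult_left_mono by blast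
  then show ?case by (simp add: prod.cl_ivl_Suc mult_ac)
qed

lemma stop_time_Max_product_bound:
  fixes v :: "nat \<Rightarrow> 'a::euclidean_space"
  assumes nonzero: "\<And>k. v k \<noteq> 0" and v_in: "\<And>k. v k \<in> C" and C: "subspace C" and x: "x \<in> C"
    and k: "1 \<le> k"
  shows "(norm (perp_projs (map (\<lambda>j. sgn (v j)) [0..<k]) x))\<^sup>2
    \<le> (\<Prod>j=1..Max {l. stop_time C v l + 1 \<le> enat k}. gamma_blk C v j) * (norm x)\<^sup>2"
proof -
  let ?e = "\<lambda>k. perp_projs (map (\<lambda>j. sgn (v j)) [0..<k]) x"
  obtain t where t: "stop_time C v (Max {l. stop_time C v l + 1 \<le> enat k}) = enat t" "t + 1 \<le> k"
    using stop_time_Max_finite[OF k] by blast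
  have "?e k = perp_projs (map (\<lambda>j. sgn (v j)) [Suc t..<k]) (?e (Suc t))"
    using t(2) by (intro perp_projs_upt_split) simp
  then have "norm (?e k) \<le> norm (?e (Suc t))"
    by (simp only:) (rule norm_perp_projs_le, simp add: norm_sgn nonzero)
  then have "(norm (?e k))\<^sup>2 \<le> (norm (?e (Suc t)))\<^sup>2" by (simp add: power_mono)
  also have "\<dots> \<le> (\<Prod>j=1..Max {l. stop_time C v l + 1 \<le> enat k}. gamma_blk C v j) * (norm x)\<^sup>2"
    using stop_time_product_bound[OF nonzero v_in C x t(1)] .
  finally show ?thesis .
qed

lemma kz_iter_residual_Suc:
  fixes A :: "real^'d^'n" and ws :: "nat \<Rightarrow> real^'d"
  assumes "A *v ws k \<noteq> 0"
  shows "A *v kz_iter A b x0 ws (Suc k) - b = perp_proj (sgn (A *v ws k)) (A *v kz_iter A b x0 ws k - b)"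
proof -
  define v where "v = A *v ws k"
  define z where "z = A *v kz_iter A b x0 ws k - b"
  define c where "c = ws k \<bullet> (transpose A *v (b - A *v kz_iter A b x0 ws k))"
  have "c = (b - A *v kz_iter A b x0 ws k) \<bullet> v"
    unfolding c_def v_def by (metis dot_lmul_matrix inner_commute transpose_matrix_vector)
  then have c: "c = - (v \<bullet> z)"
    by (simp add: z_def inner_diff_left inner_diff_right inner_commute)
  have step: "kz_iter A b x0 ws (Suc k) = kz_iter A b x0 ws k + (c / (norm v)\<^sup>2) *\<^sub>R ws k"
    by (simp only: kz_iter.simps Let_def c_def v_def)
  have "A *v kz_iter A b x0 ws (Suc k) - b = z + (c / (norm v)\<^sup>2) *\<^sub>R v"
    unfolding step by (simp add: z_def v_def matrix_vector_right_distrib matrix_vector_mult_scaleR)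
  also have "\<dots> = perp_proj (sgn v) z"
    using assms unfolding c by (simp add: perp_proj_def sgn_div_norm v_def power2_eq_square divide_inverse)
  finally show ?thesis by (simp add: v_def z_def)
qed

lemma kz_iter_residual:
  fixes A :: "real^'d^'n" and ws :: "nat \<Rightarrow> real^'d"
  assumes "\<And>k. A *v ws k \<noteq> 0"
  shows "A *v kz_iter A b x0 ws k - b = perp_projs (map (\<lambda>j. sgn (A *v ws j)) [0..<k]) (A *v x0 - b)"
  by (induction k) (simp_all del: kz_iter.simps(2) add: kz_iter_residual_Suc assms)

lemma kz_iter_error:
  fixes A :: "real^'d^'n" and ws :: "nat \<Rightarrow> real^'d"
  assumes L: "subspace L" and in_C: "\<And>k. A *v ws k \<in> orthogonal_comp L" and nonzero: "\<And>k. A *v ws k \<noteq> 0"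
  shows "A *v kz_iter A b x0 ws k - b - oproj L (A *v x0 - b)
    = perp_projs (map (\<lambda>j. sgn (A *v ws j)) [0..<k]) (oproj (orthogonal_comp L) (A *v x0 - b))"
proof -
  let ?r0 = "A *v x0 - b"
  define us where "us = map (\<lambda>j. sgn (A *v ws j)) [0..<k]"
  have "oproj L ?r0 \<bullet> (A *v ws j) = 0" for j
    using in_C[of j] oproj_in_orthogonal(1)[OF L]
    by (auto simp: orthogonal_comp_def orthogonal_def)
  then have "\<forall>u\<in>set us. u \<bullet> oproj L ?r0 = 0"
    by (auto simp: us_def sgn_div_norm inner_commute)
  then have "perp_projs us (oproj (orthogonal_comp L) ?r0 + oproj L ?r0)
      = perp_projs us (oproj (orthogonal_comp L) ?r0) + oproj L ?r0"
    by (rule perp_projs_add_orthogonal)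
  then show ?thesis
    using kz_iter_residual[OF nonzero] by (simp add: oproj_orthogonal_comp[OF L] us_def)
qed

lemma kz_iter_residual_bounds:
  fixes A :: "real^'d^'n" and b :: "real^'n" and ws :: "nat \<Rightarrow> real^'d" and x0 :: "real^'d"
  assumes L: "subspace L" and in_C: "\<And>k. A *v ws k \<in> orthogonal_comp L" and nonzero: "\<And>k. A *v ws k \<noteq> 0"
  defines "C \<equiv> orthogonal_comp L" and "v \<equiv> \<lambda>k. A *v ws k"
    and "r \<equiv> \<lambda>k. A *v kz_iter A b x0 ws k - b"
  shows "(\<forall>l\<ge>1. stop_time C v l \<noteq> \<infinity> \<longrightarrow> gamma_blk C v l \<in> {0..<1})
      \<and> (\<forall>l. stop_time C v l \<noteq> \<infinity> \<longrightarrow>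
           (norm (r (the_enat (stop_time C v l) + 1) - oproj L (r 0)))\<^sup>2
             \<le> (\<Prod>j=1..l. gamma_blk C v j) * (norm (oproj C (r 0)))\<^sup>2)
      \<and> (\<forall>k\<ge>1. let Lk = Max {l. stop_time C v l + 1 \<le> enat k} in
           stop_time C v Lk \<noteq> \<infinity> \<longrightarrow>
           (norm (r k - oproj L (r 0)))\<^sup>2 \<le> (\<Prod>j=1..Lk. gamma_blk C v j) * (norm (oproj C (r 0)))\<^sup>2)"
proof -
  let ?x = "oproj C (r 0)"
  let ?e = "\<lambda>k. perp_projs (map (\<lambda>j. sgn (v j)) [0..<k]) ?x"
  have error: "r k - oproj L (r 0) = ?e k" for k
    using kz_iter_error[OF L in_C nonzero] by (simp add: r_def v_def C_def)
  have C: "subspace C" and x: "?x \<in> C" and v: "\<And>k. v k \<in> C" "\<And>k. v k \<noteq> 0"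
    using oproj_in_orthogonal(1) subspace_orthogonal_comp in_C nonzero by (auto simp: C_def v_def)
  have "gamma_blk C v l \<in> {0..<1}" if l: "1 \<le> l" and fin: "stop_time C v l \<noteq> \<infinity>" for l
  proof -
    obtain t where "stop_time C v l = enat t" using fin by auto
    then show ?thesis using gamma_blk_contraction(1,2)[of v, OF v(2) l] by auto
  qed
  then show ?thesis
    using stop_time_product_bound[of v, OF v(2,1) C x] stop_time_Max_product_bound[of v, OF v(2,1) C x]
    by (auto simp: error Let_def)
qed

lemma AE_all_in_closed:
  fixes f :: "nat \<Rightarrow> 'a \<Rightarrow> 'b::topological_space"
  assumes "prob_space M" "closed C" "\<And>l. f l \<in> borel_measurable M"
    and "\<And>l. measure M {\<omega> \<in> space M. f l \<omega> \<in> C} = 1"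
  shows "AE \<omega> in M. \<forall>l. f l \<omega> \<in> C"
proof -
  have "{\<omega> \<in> space M. f l \<omega> \<in> C} = f l -` C \<inter> space M" for l by blast
  then have meas: "{\<omega> \<in> space M. f l \<omega> \<in> C} \<in> sets M" for l
    using measurable_sets[OF assms(3) borel_closed[OF assms(2)]] by simp
  have "AE \<omega> in M. f l \<omega> \<in> C" for l
    using prob_space.prob_Collect_eq_1[OF assms(1) meas[of l]] assms(4)[of l] by simp
  then show ?thesis by (simp add: AE_all_countable)
qed

theorem mainTheorem12:
  fixes M :: "'s measure" and A :: "real^'d^'n" and b :: "real^'n"
    and w :: "'s \<Rightarrow> real^'d" and ws :: "nat \<Rightarrow> 's \<Rightarrow> real^'d" and x0 :: "real^'d"
  assumes "prob_space M"
    and "\<exists>xs. A *v xs = b"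
    and "w \<in> borel_measurable M"
    and "\<forall>l. ws l \<in> borel_measurable M"
    and "\<forall>l. measure M {\<omega> \<in> space M. A *v ws l \<omega> \<in> Csp A M w} = 1"
    and "AE \<omega> in M. \<forall>k. A *v ws k \<omega> \<noteq> 0"
  shows "AE \<omega> in M.
    (let v = (\<lambda>k. A *v ws k \<omega>); C = Csp A M w; L = Lsp A M w;
         r = (\<lambda>k. A *v kz_iter A b x0 (\<lambda>j. ws j \<omega>) k - b);
         \<tau> = stop_time C v; \<gamma> = gamma_blk C v
     in (\<forall>l\<ge>1. \<tau> l \<noteq> \<infinity> \<longrightarrow> \<gamma> l \<in> {0..<1})
      \<and> (\<forall>l. \<tau> l \<noteq> \<infinity> \<longrightarrow>
           (norm (r (the_enat (\<tau> l) + 1) - oproj L (r 0)))^2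
             \<le> (\<Prod>j=1..l. \<gamma> j) * (norm (oproj C (r 0)))^2)
      \<and> (\<forall>k\<ge>1. let Lk = Max {l. \<tau> l + 1 \<le> enat k} in
           \<tau> Lk \<noteq> \<infinity> \<longrightarrow>
           (norm (r k - oproj L (r 0)))^2 \<le> (\<Prod>j=1..Lk. \<gamma> j) * (norm (oproj C (r 0)))^2))"
proof -
  have L: "subspace (Lsp A M w)" by (simp add: Lsp_def)
  have "(\<lambda>\<omega>. A *v ws l \<omega>) \<in> borel_measurable M" for l
    using borel_measurable_continuous_on[OF matrix_vector_mult_linear_continuous_on] assms(4) by blast
  then have "AE \<omega> in M. \<forall>l. A *v ws l \<omega> \<in> orthogonal_comp (Lsp A M w)"
    using assms(1,5) closed_subspace[OF subspace_orthogonal_comp]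
    by (intro AE_all_in_closed) (auto simp: Csp_eq_orthogonal_comp)
  with assms(6) show ?thesis
  proof eventually_elim
    case (elim \<omega>)
    then show ?case
      using kz_iter_residual_bounds[OF L, of A "\<lambda>j. ws j \<omega>" b x0] by (simp add: Csp_eq_orthogonal_comp Let_def)
  qed
qed

end
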